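(* Every finite set $A\subseteq F^2$ can be written as a disjoint union $$A = A_* \sqcup A_1'\sqcup\cdots\sqcup A_N'$$ with $N\le \log_2(|A|+1)+1$, where $A_*$ is irregular and each $A_i'$ is $k_i$-regular (with constant $C_0=2$) for some integer $k_i\ge1$.
   Context: $F$ is a finite field of odd characteristic in which $-1$ is not a square. A line in $F^2$ is a set $\{p+tv:t\in F\}$ with $p,v\in F^2$, $v\ne0$. Given a constant $C_0\ge1$ and an integer $k\ge1$, a set $A\subseteq F^2$ is $k$-regular (with constant $C_0$) if $k\le C_0|A|^{1/2}$ and there exist a set $L$ of lines (the frame of $A$) with $k/C_0\le|L|\le C_0k$ and a partition $A=\bigsqcup_{\ell\in L}A_\ell$ with $A_\ell\subseteq\ell$ and $|A|/(C_0k)\le|A_\ell|\le C_0|A|/k$ for every $\ell\in L$. A set $A\subseteq F^2$ is irregular if $|\ell\cap A|\le|A|^{1/2}$ for every line $\ell$. *)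

theory Defs
  imports Complex_Main
begin

definition line_through :: "'a::field \<times> 'a \<Rightarrow> 'a \<times> 'a \<Rightarrow> ('a \<times> 'a) set" where
  "line_through p v = {(fst p + t * fst v, snd p + t * snd v) | t. True}"

definition is_line :: "('a::field \<times> 'a) set \<Rightarrow> bool" where
  "is_line l \<longleftrightarrow> (\<exists>p v. v \<noteq> (0, 0) \<and> l = line_through p v)"

definition regular :: "real \<Rightarrow> nat \<Rightarrow> ('a::field \<times> 'a) set \<Rightarrow> bool" where
  "regular C0 k A \<longleftrightarrow>
     real k \<le> C0 * sqrt (real (card A)) \<and>
     (\<exists>L :: ('a \<times> 'a) set set. \<exists>Al :: ('a \<times> 'a) set \<Rightarrow> ('a \<times> 'a) set.
        (\<forall>l\<in>L. is_line l) \<and> finite L \<and>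
        real k / C0 \<le> real (card L) \<and> real (card L) \<le> C0 * real k \<and>
        A = (\<Union>l\<in>L. Al l) \<and>
        (\<forall>l\<in>L. \<forall>l'\<in>L. l \<noteq> l' \<longrightarrow> Al l \<inter> Al l' = {}) \<and>
        (\<forall>l\<in>L. Al l \<subseteq> l \<and>
           real (card A) / (C0 * real k) \<le> real (card (Al l)) \<and>
           real (card (Al l)) \<le> C0 * real (card A) / real k))"

definition irregular :: "('a::field \<times> 'a) set \<Rightarrow> bool" where
  "irregular A \<longleftrightarrow> (\<forall>l. is_line l \<longrightarrow> real (card (l \<inter> A)) \<le> sqrt (real (card A)))"

end

theory Submission
  imports Defs
begin

text \<open>
Greedily remove a line meeting the current set in more than the square root of its size, until
the remainder is irregular. A removed piece is larger than the square root of the set it was cut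
from, which contains all later pieces; so in every subfamily of removed pieces the earliest one is
rich for the union of the subfamily. Group the pieces dyadically by size: a class of k pieces of
size in [2^t, 2^(t+1)) has union of size n \<ge> k 2^t, and richness of its earliest member gives
n < 4^(t+1), hence k < 4 \<cdot> 2^t and k^2 \<le> 4n. Piece sizes lie in [2, |A|], so there are at most
log_2 |A| classes. The argument works over any field.
\<close>

lemma not_irregular_imp_rich_line:
  assumes "\<not> irregular B"
  shows "\<exists>l. is_line l \<and> card B < card (l \<inter> B) ^ 2"
proof -
  from assms obtain l where l: "is_line l" "sqrt (real (card B)) < real (card (l \<inter> B))"
    unfolding irregular_def by (auto simp: not_le)
  have "real (card B) = (sqrt (real (card B)))^2" by simp
  also have "\<dots> < (real (card (l \<inter> B)))^2"
    using l(2) by (intro power_strict_mono) auto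
  finally have "real (card B) < real (card (l \<inter> B) ^ 2)" by simp
  then have "card B < card (l \<inter> B) ^ 2" by (simp only: of_nat_less_iff)
  then show ?thesis using l(1) by blast
qed

definition rich_line_family ::
    "('a::field \<times> 'a) set \<Rightarrow> ('a \<times> 'a) set set \<Rightarrow> (('a \<times> 'a) set \<Rightarrow> ('a \<times> 'a) set) \<Rightarrow> bool" where
  "rich_line_family B S g \<longleftrightarrow> finite S \<and>
     (\<forall>l\<in>S. is_line l \<and> g l \<subseteq> l \<inter> B \<and> 2 \<le> card (g l)) \<and>
     (\<forall>l\<in>S. \<forall>l'\<in>S. l \<noteq> l' \<longrightarrow> g l \<inter> g l' = {}) \<and>
     (\<forall>T\<subseteq>S. T \<noteq> {} \<longrightarrow> (\<exists>l\<in>T. card (\<Union>(g ` T)) < card (g l) ^ 2))"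

lemma rich_line_family_pieces_subset:
  assumes "rich_line_family B S g"
  shows "\<Union>(g ` S) \<subseteq> B"
proof -
  from assms have "\<forall>l\<in>S. g l \<subseteq> l \<inter> B" unfolding rich_line_family_def by blast
  then show ?thesis by blast
qed

lemma rich_line_family_mono:
  assumes "rich_line_family B S g" and "C \<subseteq> S"
  shows "rich_line_family B C g"
proof -
  from assms(1) have "finite S"
    and "\<forall>l\<in>S. is_line l \<and> g l \<subseteq> l \<inter> B \<and> 2 \<le> card (g l)"
    and "\<forall>l\<in>S. \<forall>l'\<in>S. l \<noteq> l' \<longrightarrow> g l \<inter> g l' = {}"
    and "\<forall>T\<subseteq>S. T \<noteq> {} \<longrightarrow> (\<exists>l\<in>T. card (\<Union>(g ` T)) < card (g l) ^ 2)"
    unfolding rich_line_family_def by blast+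
  with \<open>C \<subseteq> S\<close> show ?thesis
    unfolding rich_line_family_def by (meson finite_subset order_trans subsetD)
qed

lemma rich_line_family_removed_line_notin:
  assumes "rich_line_family (B - l) S g"
  shows "l \<notin> S"
proof
  assume "l \<in> S"
  with assms have "g l \<subseteq> l \<inter> (B - l)" "2 \<le> card (g l)"
    unfolding rich_line_family_def by blast+
  then show False by auto
qed

lemma rich_line_family_insert:
  fixes B :: "('a::field \<times> 'a) set"
  assumes fam: "rich_line_family (B - l) S g" and "finite B" and line: "is_line l"
    and rich: "card B < card (l \<inter> B) ^ 2"
  shows "rich_line_family B (insert l S) (g(l := l \<inter> B))" (is "rich_line_family B _ ?g")
proof -
  from fam have "finite S"
    and fam_pieces: "\<forall>l'\<in>S. is_line l' \<and> g l' \<subseteq> l' \<inter> (B - l) \<and> 2 \<le> card (g l')"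
    and fam_disjoint: "\<forall>l1\<in>S. \<forall>l2\<in>S. l1 \<noteq> l2 \<longrightarrow> g l1 \<inter> g l2 = {}"
    and fam_rich: "\<forall>T\<subseteq>S. T \<noteq> {} \<longrightarrow> (\<exists>l'\<in>T. card (\<Union>(g ` T)) < card (g l') ^ 2)"
    unfolding rich_line_family_def by blast+
  have "l \<notin> S" using fam by (rule rich_line_family_removed_line_notin)
  then have g_off_l: "?g l' = g l'" if "l' \<in> S" for l'
    using that by auto
  have "card (l \<inter> B) \<le> card B" using \<open>finite B\<close> by (intro card_mono) auto
  have two: "2 \<le> card (l \<inter> B)"
  proof (rule ccontr)
    assume "\<not> 2 \<le> card (l \<inter> B)"
    then have "card (l \<inter> B) * card (l \<inter> B) \<le> 1 * card (l \<inter> B)"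
      by (intro mult_le_mono1) simp
    then have "card (l \<inter> B) ^ 2 \<le> card (l \<inter> B)" by (simp add: power2_eq_square)
    with rich \<open>card (l \<inter> B) \<le> card B\<close> show False by linarith
  qed
  have pieces: "\<forall>l'\<in>insert l S. is_line l' \<and> ?g l' \<subseteq> l' \<inter> B \<and> 2 \<le> card (?g l')"
    using fam_pieces g_off_l line two by auto
  have disjoint: "\<forall>l1\<in>insert l S. \<forall>l2\<in>insert l S. l1 \<noteq> l2 \<longrightarrow> ?g l1 \<inter> ?g l2 = {}"
    using fam_pieces fam_disjoint g_off_l by (simp add: disjoint_iff) blast
  have "\<exists>l'\<in>T. card (\<Union>(?g ` T)) < card (?g l') ^ 2" if "T \<subseteq> insert l S" "T \<noteq> {}" for T
  proof (cases "l \<in> T")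
    case True
    have "\<Union>(?g ` T) \<subseteq> B" using pieces that(1) by blast
    then have "card (\<Union>(?g ` T)) \<le> card B" using \<open>finite B\<close> by (rule card_mono[rotated])
    with rich True show ?thesis by (metis fun_upd_same le_less_trans)
  next
    case False
    with that have "T \<subseteq> S" by blast
    with fam_rich that obtain l' where "l' \<in> T" "card (\<Union>(g ` T)) < card (g l') ^ 2" by blast
    moreover have "?g ` T = g ` T" using \<open>T \<subseteq> S\<close> \<open>l \<notin> S\<close> by (intro image_cong) auto
    ultimately show ?thesis using \<open>T \<subseteq> S\<close> g_off_l by (metis subsetD)
  qed
  with \<open>finite S\<close> pieces disjoint show ?thesis unfolding rich_line_family_def by blast
qed

lemma exists_rich_line_family_irregular_rest:
  fixes B :: "('a::field \<times> 'a) set"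
  assumes "finite B"
  shows "\<exists>S g. rich_line_family B S g \<and> irregular (B - \<Union>(g ` S))"
  using assms
proof (induction "card B" arbitrary: B rule: less_induct)
  case less
  show ?case
  proof (cases "irregular B")
    case True
    then have "rich_line_family B {} id \<and> irregular (B - \<Union>(id ` {}))"
      by (simp add: rich_line_family_def)
    then show ?thesis by blast
  next
    case False
    then obtain l where line: "is_line l" and rich: "card B < card (l \<inter> B) ^ 2"
      using not_irregular_imp_rich_line by blast
    then have "l \<inter> B \<noteq> {}" by auto
    then have "card (B - l) < card B" using \<open>finite B\<close> by (intro psubset_card_mono) auto
    with less obtain S g where fam: "rich_line_family (B - l) S g"
      and rest: "irregular (B - l - \<Union>(g ` S))" by blast
    have "l \<notin> S" using fam by (rule rich_line_family_removed_line_notin)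
    then have "B - \<Union>((g(l := l \<inter> B)) ` insert l S) = B - l - \<Union>(g ` S)" by auto
    with rich_line_family_insert[OF fam \<open>finite B\<close> line rich] rest show ?thesis by metis
  qed
qed

lemma dyadic_class_card_le_2_sqrt:
  fixes c :: "'b \<Rightarrow> nat"
  assumes sizes: "\<forall>l\<in>C. 2^t \<le> c l \<and> c l < 2^Suc t"
    and rich: "\<exists>l\<in>C. sum c C < c l ^ 2"
  shows "real (card C) \<le> 2 * sqrt (real (sum c C))"
proof -
  have lower: "card C * 2^t \<le> sum c C"
    using sizes sum_bounded_below[of C "2^t" c] by auto
  obtain l where "l \<in> C" and "sum c C < c l ^ 2" using rich by blast
  moreover have "c l ^ 2 \<le> (2^Suc t) ^ 2"
    using sizes \<open>l \<in> C\<close> by (intro power_mono) auto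
  moreover have "(2^Suc t) ^ 2 = (4 * 2^t) * (2::nat)^t" by (simp add: power2_eq_square)
  ultimately have "card C * 2^t < (4 * 2^t) * 2^t" using lower by linarith
  then have "card C * card C \<le> card C * (4 * 2^t)" by (simp add: mult_less_cancel2)
  also have "\<dots> \<le> 4 * sum c C" using lower by simp
  finally have "real (card C * card C) \<le> real (4 * sum c C)" by (simp only: of_nat_le_iff)
  then have "real (card C) ^ 2 \<le> (2 * sqrt (real (sum c C))) ^ 2"
    by (simp add: power_mult_distrib power2_eq_square[of "real _"] del: of_nat_sum)
  then show ?thesis by (rule power2_le_imp_le) (simp add: sum_nonneg)
qed

lemma dyadic_class_balanced:
  fixes c :: "'b \<Rightarrow> nat"
  assumes "finite C" and sizes: "\<forall>l\<in>C. 2^t \<le> c l \<and> c l < 2^Suc t" and "l \<in> C"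
  shows "real (sum c C) / (2 * real (card C)) \<le> real (c l)
    \<and> real (c l) \<le> 2 * real (sum c C) / real (card C)"
proof -
  have "0 < card C" using assms card_gt_0_iff by blast
  have lower: "card C * 2^t \<le> sum c C"
    using sizes sum_bounded_below[of C "2^t" c] by auto
  have upper: "sum c C < card C * 2^Suc t"
    using sizes \<open>0 < card C\<close> sum_bounded_above_strict[of C c "2^Suc t"] by auto
  have "card C * 2^Suc t \<le> card C * (2 * c l)" using sizes \<open>l \<in> C\<close> by simp
  with upper have "sum c C \<le> card C * (2 * c l)" by linarith
  have "c l * card C \<le> 2^Suc t * card C" using sizes \<open>l \<in> C\<close> by (simp add: less_imp_le)
  also have "\<dots> \<le> 2 * sum c C" using lower by (simp add: mult.commute)
  finally have "c l * card C \<le> 2 * sum c C" .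
  then have "real (c l) * real (card C) \<le> 2 * real (sum c C)"
    by (metis of_nat_le_iff of_nat_mult of_nat_numeral)
  moreover have "real (sum c C) \<le> real (c l) * (2 * real (card C))"
    using \<open>sum c C \<le> card C * (2 * c l)\<close>
    by (metis mult.commute mult.left_commute of_nat_le_iff of_nat_mult of_nat_numeral)
  ultimately show ?thesis using \<open>0 < card C\<close> by (simp add: pos_divide_le_eq pos_le_divide_eq)
qed

lemma regular_dyadic_class:
  fixes C :: "('a::field \<times> 'a) set set"
  assumes fam: "rich_line_family B C g" and "C \<noteq> {}"
    and sizes: "\<forall>l\<in>C. 2^t \<le> card (g l) \<and> card (g l) < 2^Suc t"
  shows "regular 2 (card C) (\<Union>(g ` C))"
proof -
  from fam \<open>C \<noteq> {}\<close> have "finite C"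
    and pieces: "\<forall>l\<in>C. is_line l \<and> g l \<subseteq> l \<inter> B \<and> 2 \<le> card (g l)"
    and disjoint: "\<forall>l\<in>C. \<forall>l'\<in>C. l \<noteq> l' \<longrightarrow> g l \<inter> g l' = {}"
    and rich: "\<exists>l\<in>C. card (\<Union>(g ` C)) < card (g l) ^ 2"
    unfolding rich_line_family_def by blast+
  have "finite (g l)" if "l \<in> C" for l
    using pieces that card.infinite by force
  then have card_union: "card (\<Union>(g ` C)) = (\<Sum>l\<in>C. card (g l))"
    using disjoint by (intro card_UN_disjoint \<open>finite C\<close>) auto
  have few: "real (card C) \<le> 2 * sqrt (real (card (\<Union>(g ` C))))"
    using dyadic_class_card_le_2_sqrt[OF sizes] rich unfolding card_union .
  have balanced: "\<forall>l\<in>C. real (card (\<Union>(g ` C))) / (2 * real (card C)) \<le> real (card (g l))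
      \<and> real (card (g l)) \<le> 2 * real (card (\<Union>(g ` C))) / real (card C)"
    using dyadic_class_balanced[OF \<open>finite C\<close> sizes] unfolding card_union by blast
  show ?thesis
    unfolding regular_def
    by (intro conjI exI[of _ C] exI[of _ g]) (use few balanced pieces disjoint \<open>finite C\<close> in auto)
qed

lemma dyadic_exponent_unique:
  fixes a b c :: nat
  assumes "2^a \<le> c" "c < 2^Suc a" "2^b \<le> c" "c < 2^Suc b"
  shows "a = b"
proof -
  from assms have "(2::nat)^a < 2^Suc b" "(2::nat)^b < 2^Suc a" by linarith+
  then have "a < Suc b" "b < Suc a" by (auto intro: power_less_imp_less_exp[rotated])
  then show ?thesis by simp
qed

lemma finite_exponents_bounded:
  fixes m :: nat
  assumes "\<forall>t\<in>T. 2^t \<le> m"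
  shows "finite T"
proof (rule finite_subset)
  show "T \<subseteq> {..m}"
  proof
    fix t assume "t \<in> T"
    with assms have "t < 2^t" "2^t \<le> m" by (simp_all add: less_exp)
    then have "t \<le> m" by linarith
    then show "t \<in> {..m}" by simp
  qed
qed simp

lemma card_exponents_le_log2:
  assumes bounds: "\<forall>t\<in>T. 1 \<le> t \<and> 2^t \<le> m"
  shows "real (card T) \<le> log 2 (real m + 1)"
proof (cases "T = {}")
  case False
  define M where "M = Max T"
  have "finite T" using bounds by (intro finite_exponents_bounded) blast
  with False bounds M_def have "M \<in> T" "T \<subseteq> {1..M}" by auto
  then have "card T \<le> M" using card_mono[of "{1..M}" T] by simp
  moreover have "2^M \<le> m + 1" using bounds \<open>M \<in> T\<close> by fastforce
  then have "real M \<le> log 2 (real m + 1)"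
    using le_log2_of_power[of M "m + 1"] by (simp add: add.commute)
  ultimately show ?thesis by linarith
qed simp

lemma exists_dyadic_partition:
  fixes c :: "'b \<Rightarrow> nat"
  assumes "finite S" and bounds: "\<forall>l\<in>S. 2 \<le> c l \<and> c l \<le> m"
  shows "\<exists>N (C :: nat \<Rightarrow> 'b set). real N \<le> log 2 (real m + 1) \<and> S = (\<Union>i<N. C i) \<and>
     (\<forall>i<N. \<forall>j<N. i \<noteq> j \<longrightarrow> C i \<inter> C j = {}) \<and>
     (\<forall>i<N. C i \<noteq> {} \<and> (\<exists>t. \<forall>l\<in>C i. 2^t \<le> c l \<and> c l < 2^Suc t))"
proof -
  define size_class where "size_class t = {l\<in>S. 2^t \<le> c l \<and> c l < 2^Suc t}" for t
  define Ts where "Ts = {t. size_class t \<noteq> {}}"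
  have Ts_bounds: "1 \<le> t \<and> 2^t \<le> m" if "t \<in> Ts" for t
  proof -
    from that obtain l where "l \<in> S" "2^t \<le> c l" "c l < 2^Suc t"
      unfolding Ts_def size_class_def by blast
    with bounds show ?thesis by (cases t) auto
  qed
  have "finite Ts" using Ts_bounds by (intro finite_exponents_bounded) blast
  have card_Ts: "real (card Ts) \<le> log 2 (real m + 1)"
    using Ts_bounds by (intro card_exponents_le_log2) blast
  obtain e where e: "bij_betw e {..<card Ts} Ts"
    using ex_bij_betw_nat_finite[OF \<open>finite Ts\<close>] lessThan_atLeast0 by metis
  have "S \<subseteq> (\<Union>i<card Ts. size_class (e i))"
  proof
    fix l assume "l \<in> S"
    with bounds have "1 \<le> c l" by fastforce
    then obtain t where "2^t \<le> c l" "c l < 2^(t + 1)"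
      using ex_power_ivl1[of 2 "c l"] by auto
    with \<open>l \<in> S\<close> have "t \<in> Ts" "l \<in> size_class t" unfolding Ts_def size_class_def by auto
    with e show "l \<in> (\<Union>i<card Ts. size_class (e i))" unfolding bij_betw_def by force
  qed
  then have cover: "S = (\<Union>i<card Ts. size_class (e i))" unfolding size_class_def by blast
  have "size_class (e i) \<inter> size_class (e j) = {}" if "i < card Ts" "j < card Ts" "i \<noteq> j" for i j
  proof -
    from e that have "e i \<noteq> e j" unfolding bij_betw_def inj_on_def by blast
    then show ?thesis unfolding size_class_def using dyadic_exponent_unique by blast
  qed
  moreover have "size_class (e i) \<noteq> {}" if "i < card Ts" for i
    using e that unfolding bij_betw_def Ts_def by blast
  moreover have "\<exists>t. \<forall>l\<in>size_class (e i). 2^t \<le> c l \<and> c l < 2^Suc t" for i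
    unfolding size_class_def by blast
  ultimately show ?thesis using card_Ts cover
    by (intro exI[of _ "card Ts"] exI[of _ "\<lambda>i. size_class (e i)"]) auto
qed

lemma disjoint_UN_images:
  assumes "\<forall>x\<in>S. \<forall>y\<in>S. x \<noteq> y \<longrightarrow> g x \<inter> g y = {}"
    and "P \<subseteq> S" and "Q \<subseteq> S" and "P \<inter> Q = {}"
  shows "\<Union>(g ` P) \<inter> \<Union>(g ` Q) = {}"
proof -
  have "g x \<inter> g y = {}" if "x \<in> P" "y \<in> Q" for x y
  proof -
    from that assms(2-4) have "x \<in> S" "y \<in> S" "x \<noteq> y" by auto
    with assms(1) show ?thesis by blast
  qed
  then show ?thesis by auto
qed

lemma rich_line_family_regular_decomposition:
  fixes B :: "('a::field \<times> 'a) set"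
  assumes fam: "rich_line_family B S g" and "finite B"
  shows "\<exists>N (Ap :: nat \<Rightarrow> ('a \<times> 'a) set) (k :: nat \<Rightarrow> nat).
     real N \<le> log 2 (real (card B) + 1) \<and> \<Union>(g ` S) = (\<Union>i<N. Ap i) \<and>
     (\<forall>i<N. \<forall>j<N. i \<noteq> j \<longrightarrow> Ap i \<inter> Ap j = {}) \<and>
     (\<forall>i<N. k i \<ge> 1 \<and> regular 2 (k i) (Ap i))"
proof -
  from fam have "finite S" and pieces: "\<forall>l\<in>S. is_line l \<and> g l \<subseteq> l \<inter> B \<and> 2 \<le> card (g l)"
    and disjoint: "\<forall>l\<in>S. \<forall>l'\<in>S. l \<noteq> l' \<longrightarrow> g l \<inter> g l' = {}"
    unfolding rich_line_family_def by blast+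
  have "\<forall>l\<in>S. 2 \<le> card (g l) \<and> card (g l) \<le> card B"
    using pieces \<open>finite B\<close> by (meson card_mono le_inf_iff)
  from exists_dyadic_partition[OF \<open>finite S\<close> this] obtain N C
    where N: "real N \<le> log 2 (real (card B) + 1)" and cover: "S = (\<Union>i<N. C i)"
      and classes_disjoint: "\<forall>i<N. \<forall>j<N. i \<noteq> j \<longrightarrow> C i \<inter> C j = {}"
      and classes: "\<forall>i<N. C i \<noteq> {} \<and> (\<exists>t. \<forall>l\<in>C i. 2^t \<le> card (g l) \<and> card (g l) < 2^Suc t)"
    by blast
  have classes_in_S: "C i \<subseteq> S" if "i < N" for i
    using cover that by blast
  have "\<Union>(g ` S) = (\<Union>i<N. \<Union>(g ` C i))"
    unfolding cover by auto
  moreover have "\<forall>i<N. \<forall>j<N. i \<noteq> j \<longrightarrow> \<Union>(g ` C i) \<inter> \<Union>(g ` C j) = {}"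
    using classes_disjoint by (intro allI impI disjoint_UN_images[OF disjoint] classes_in_S) auto
  moreover have "\<forall>i<N. card (C i) \<ge> 1 \<and> regular 2 (card (C i)) (\<Union>(g ` C i))"
  proof (intro allI impI conjI)
    fix i assume "i < N"
    with classes obtain t where "C i \<noteq> {}"
      and sizes: "\<forall>l\<in>C i. 2^t \<le> card (g l) \<and> card (g l) < 2^Suc t" by blast
    have "finite (C i)" using \<open>finite S\<close> classes_in_S[OF \<open>i < N\<close>] by (rule finite_subset[rotated])
    with \<open>C i \<noteq> {}\<close> show "card (C i) \<ge> 1" by (simp add: Suc_le_eq card_gt_0_iff)
    show "regular 2 (card (C i)) (\<Union>(g ` C i))"
      using rich_line_family_mono[OF fam classes_in_S[OF \<open>i < N\<close>]] \<open>C i \<noteq> {}\<close> sizes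
      by (rule regular_dyadic_class)
  qed
  ultimately show ?thesis using N
    by (intro exI[of _ N] exI[of _ "\<lambda>i. \<Union>(g ` C i)"] exI[of _ "\<lambda>i. card (C i)"]) blast
qed

theorem lemma4p1:
  fixes A :: "('a::{field,finite} \<times> 'a) set"
  assumes "odd CHAR('a)"
    and "\<not> (\<exists>x::'a. x * x = - 1)"
  shows "\<exists>Astar (N::nat) (Ap :: nat \<Rightarrow> ('a \<times> 'a) set) (k :: nat \<Rightarrow> nat).
           real N \<le> log 2 (real (card A) + 1) + 1 \<and>
           A = Astar \<union> (\<Union>i<N. Ap i) \<and>
           (\<forall>i<N. Astar \<inter> Ap i = {}) \<and>
           (\<forall>i<N. \<forall>j<N. i \<noteq> j \<longrightarrow> Ap i \<inter> Ap j = {}) \<and>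
           irregular Astar \<and>
           (\<forall>i<N. k i \<ge> 1 \<and> regular 2 (k i) (Ap i))"
proof -
  obtain S g where fam: "rich_line_family A S g" and rest: "irregular (A - \<Union>(g ` S))"
    using exists_rich_line_family_irregular_rest[OF finite] by blast
  from rich_line_family_regular_decomposition[OF fam finite] obtain N Ap k
    where N: "real N \<le> log 2 (real (card A) + 1)" and cover: "\<Union>(g ` S) = (\<Union>i<N. Ap i)"
      and disjoint: "\<forall>i<N. \<forall>j<N. i \<noteq> j \<longrightarrow> Ap i \<inter> Ap j = {}"
      and regular: "\<forall>i<N. k i \<ge> 1 \<and> regular 2 (k i) (Ap i)"
    by (elim exE conjE) (rule that)
  from rich_line_family_pieces_subset[OF fam] cover
  have "A = (A - \<Union>(g ` S)) \<union> (\<Union>i<N. Ap i)" "\<forall>i<N. (A - \<Union>(g ` S)) \<inter> Ap i = {}"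
    by auto
  moreover have "real N \<le> log 2 (real (card A) + 1) + 1" using N by linarith
  ultimately show ?thesis using rest disjoint regular
    by (intro exI[of _ "A - \<Union>(g ` S)"] exI[of _ N] exI[of _ Ap] exI[of _ k]) simp
qed

end
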